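(* Let $X,Y$ be locally compact Hausdorff spaces, $p\colon X\to Y$ a continuous proper map, and $\mu_X$ a positive Radon measure on $X$. Let $A$ be a dense $\mathbb{C}$-subalgebra of $C_0(Y)$, and let $M\subset C_0(X)\cap\mathcal{L}^1(X,\mu_X)$ be a $p^*A$-module under pointwise multiplication such that: (1) $M$ is stable under pointwise complex conjugation; (2) for every $y\in Y$, the set of restrictions of elements of $M$ to $p^{-1}(y)$ is dense in $C(p^{-1}(y))$; (3) for every $m\in M$ there exists $n\in M$ with $|m|\le n$. Then $\mathcal{RI}(X,\mu_X)\subset\overline{M}^{\tau_M}$; that is, for every $\mu_X$-Riemann integrable $\phi$ and every $\epsilon>0$ there exist $m_1,m_2\in \overline{M}^{\tau_M}$ (equivalently in $M$) with $|\phi-m_1|\le m_2$ and $\mu_X(m_2)<\epsilon$.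
   Context: $p^*A=\{a\circ p: a\in A\}$. A function $\phi\colon X\to\mathbb{C}$ is $\mu_X$-Riemann integrable if it is bounded, compactly supported, and its set of discontinuity points is $\mu_X$-null; $\mathcal{RI}(X,\mu_X)$ is the set of such functions. For a linear subspace $M\subset\mathcal{L}^1(X,\mu_X)$ stable under complex conjugation, $\overline{M}^{\tau_M}$ denotes the set of $h\in\mathcal{L}^1(X,\mu_X)$ such that for every $\epsilon>0$ there exist $m_1,m_2\in M$ with $|h-m_1|\le m_2$ pointwise and $\mu_X(m_2)<\epsilon$. *)

theory Defs
  imports "HOL-Analysis.Analysis"
begin

definition C0 :: "('a::topological_space \<Rightarrow> complex) set" where
  "C0 = {f. continuous_on UNIV f \<and> (\<forall>e>0. compact {y. cmod (f y) \<ge> e})}"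

definition proper_map_cont :: "('a::topological_space \<Rightarrow> 'b::topological_space) \<Rightarrow> bool" where
  "proper_map_cont p \<longleftrightarrow> continuous_on UNIV p \<and> (\<forall>K. compact K \<longrightarrow> compact (p -` K))"

definition radon_measure :: "'a::topological_space measure \<Rightarrow> bool" where
  "radon_measure mu \<longleftrightarrow> sets mu = sets borel \<and>
     (\<forall>K. compact K \<longrightarrow> emeasure mu K < \<infinity>) \<and>
     (\<forall>B\<in>sets mu. emeasure mu B = (INF U\<in>{U. open U \<and> B \<subseteq> U}. emeasure mu U)) \<and>
     (\<forall>U. open U \<longrightarrow> emeasure mu U = (SUP K\<in>{K. compact K \<and> K \<subseteq> U}. emeasure mu K))"

definition L1 :: "'a measure \<Rightarrow> ('a \<Rightarrow> complex) set" where
  "L1 mu = {f. integrable (completion mu) f}"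

definition RI :: "'a::t2_space measure \<Rightarrow> ('a \<Rightarrow> complex) set" where
  "RI mu = {phi. bounded (range phi) \<and> compact (closure {x. phi x \<noteq> 0}) \<and>
              (\<exists>N\<in>null_sets (completion mu). {x. \<not> isCont phi x} \<subseteq> N)}"

definition tau_closure :: "'a measure \<Rightarrow> ('a \<Rightarrow> complex) set \<Rightarrow> ('a \<Rightarrow> complex) set" where
  "tau_closure mu M = {h \<in> L1 mu. \<forall>e>0. \<exists>m1\<in>M. \<exists>m2\<in>M.
      (\<forall>x. m2 x \<in> \<real> \<and> cmod (h x - m1 x) \<le> Re (m2 x)) \<and>
      Re (integral\<^sup>L (completion mu) m2) < e}"

end

theory Submission
  imports Defs
begin

(* A Riemann integrable \<phi> is continuous off a null set N, which lies in an open set U of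
  small measure.  A partition of unity on the compact support of \<phi>, subordinate to U and to
  sets on which \<phi> oscillates by less than \<delta>, squeezes \<phi> between compactly supported
  continuous functions g and h with |\<phi> - g| \<le> h and \<integral>h small.  Since the \<tau>-closure is
  stable under such squeezing, it suffices to show that every compactly supported
  continuous \<psi> lies in it.

  Fibrewise density gives, for each y, some m\<^sub>y \<in> M with |\<psi> - m\<^sub>y| < \<eta> on p\<^sup>-\<^sup>1(y), hence on a
  tube p\<^sup>-\<^sup>1(V\<^sub>y) because the proper map p is closed.  A partition of unity \<beta>\<^sub>i on Y,
  uniformly approximated by a\<^sub>i \<in> A, glues these to \<Sum> (a\<^sub>i \<circ> p) m\<^sub>i \<in> M with error at most
  \<eta> N + \<epsilon> \<Sum> n\<^sub>i, where n\<^sub>i \<in> M dominate the m\<^sub>i and N \<in> M is at least 1 near the support of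
  \<psi>; N itself comes from the same gluing applied to the constant 1. *)

section \<open>Compact supports and partitions of unity\<close>

lemma Hausdorff_space_euclidean_t2: "Hausdorff_space (euclidean :: 'a::t2_space topology)"
  unfolding Hausdorff_space_def disjnt_def
  using hausdorff by (simp add: open_openin[symmetric]) blast

lemma locally_compact_compact_between:
  fixes C W :: "'a::t2_space set"
  assumes lc: "locally_compact_space (euclidean :: 'a topology)"
    and "compact C" "open W" "C \<subseteq> W"
  obtains U K where "open U" "compact K" "C \<subseteq> U" "U \<subseteq> K" "K \<subseteq> W"
proof -
  have "locally_compact_space (subtopology euclidean W)"
    by (rule locally_compact_space_open_subset)
      (use lc \<open>open W\<close> Hausdorff_space_euclidean_t2 in auto)
  moreover have "compactin (subtopology euclidean W) C"
    using assms by (simp add: compactin_subtopology)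
  ultimately obtain U K where "openin (subtopology euclidean W) U"
      "compactin (subtopology euclidean W) K" "C \<subseteq> U" "U \<subseteq> K"
    using locally_compact_space_compact_closed_compact Hausdorff_space_subtopology
      Hausdorff_space_euclidean_t2 by metis
  then show thesis
    using that \<open>open W\<close> by (auto simp: compactin_subtopology openin_open_subtopology)
qed

definition compactly_supported :: "('a::topological_space \<Rightarrow> 'b::zero) \<Rightarrow> bool" where
  "compactly_supported f \<longleftrightarrow> (\<exists>K. compact K \<and> (\<forall>x. x \<notin> K \<longrightarrow> f x = 0))"

lemma compactly_supported_subset:
  assumes "compactly_supported f" "\<And>x. f x = 0 \<Longrightarrow> g x = 0"
  shows "compactly_supported g"
  using assms unfolding compactly_supported_def by blast

lemma compactly_supported_sum:
  assumes "finite I" "\<And>i. i \<in> I \<Longrightarrow> compactly_supported (f i)"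
  shows "compactly_supported (\<lambda>x. \<Sum>i\<in>I. f i x)"
proof -
  have "\<forall>i\<in>I. \<exists>K. compact K \<and> (\<forall>x. x \<notin> K \<longrightarrow> f i x = 0)"
    using assms(2) unfolding compactly_supported_def by blast
  then obtain K where K: "\<And>i. i \<in> I \<Longrightarrow> compact (K i) \<and> (\<forall>x. x \<notin> K i \<longrightarrow> f i x = 0)"
    by (metis bchoice)
  have "compact (\<Union>i\<in>I. K i)"
    using assms(1) K by (intro compact_UN) auto
  moreover have "\<forall>x. x \<notin> (\<Union>i\<in>I. K i) \<longrightarrow> (\<Sum>i\<in>I. f i x) = 0"
    using K by (auto intro: sum.neutral)
  ultimately show ?thesis
    unfolding compactly_supported_def by blast
qed

lemma compactly_supported_in_C0:
  fixes f :: "'a::t2_space \<Rightarrow> complex"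
  assumes "continuous_on UNIV f" "compactly_supported f"
  shows "f \<in> C0"
  unfolding C0_def
proof (intro CollectI conjI allI impI)
  fix e :: real assume "e > 0"
  obtain K where K: "compact K" "\<And>x. x \<notin> K \<Longrightarrow> f x = 0"
    using assms(2) unfolding compactly_supported_def by blast
  have "{y. e \<le> cmod (f y)} = K \<inter> {y. e \<le> cmod (f y)}"
    using K(2) \<open>e > 0\<close> by force
  moreover have "closed {y. e \<le> cmod (f y)}"
    using assms(1) by (intro closed_Collect_le continuous_intros)
  ultimately show "compact {y. e \<le> cmod (f y)}"
    using K(1) by (metis compact_Int_closed)
qed (rule assms(1))

lemma Urysohn_compactly_supported:
  fixes C V :: "'a::t2_space set"
  assumes lc: "locally_compact_space (euclidean :: 'a topology)"
    and "compact C" "open V" "C \<subseteq> V"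
  obtains f :: "'a \<Rightarrow> real" where "continuous_on UNIV f" "\<forall>x. 0 \<le> f x \<and> f x \<le> 1"
    "\<forall>x\<in>C. f x = 1" "\<forall>x. f x \<noteq> 0 \<longrightarrow> x \<in> V" "compactly_supported f"
proof -
  obtain U K where UK: "open U" "compact K" "C \<subseteq> U" "U \<subseteq> K" "K \<subseteq> V"
    using locally_compact_compact_between[OF assms] .
  have "completely_regular_space (euclidean :: 'a topology)"
    using locally_compact_regular_imp_completely_regular_space[OF lc]
      Hausdorff_space_euclidean_t2 by blast
  moreover have "compactin euclidean C" "closedin euclidean (- U)" "disjnt C (- U)"
    using \<open>compact C\<close> \<open>open U\<close> \<open>C \<subseteq> U\<close> by (auto simp: disjnt_def closed_Compl)
  ultimately obtain f where f: "continuous_map euclidean (top_of_set {0..1::real}) f"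
      "f ` (- U) \<subseteq> {0}" "f ` C \<subseteq> {1}"
    by (rule Urysohn_completely_regular_compact_closed[OF zero_le_one])
  have "continuous_on UNIV f" "\<forall>x. 0 \<le> f x \<and> f x \<le> 1"
    using f(1) by (auto simp: continuous_map_in_subtopology)
  moreover have "\<forall>x. f x \<noteq> 0 \<longrightarrow> x \<in> U"
    using f(2) by blast
  ultimately show thesis
  proof (intro that)
    show "\<forall>x\<in>C. f x = 1"
      using f(3) by blast
    show "compactly_supported f"
      unfolding compactly_supported_def using \<open>\<forall>x. f x \<noteq> 0 \<longrightarrow> x \<in> U\<close> UK by blast
  qed (use UK in blast)+
qed

lemma Urysohn_compactly_supported_nhd:
  fixes V :: "'a::t2_space set"
  assumes lc: "locally_compact_space (euclidean :: 'a topology)" and "open V" "y \<in> V"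
  obtains U f where "open U" "y \<in> U" "continuous_on UNIV f" "compactly_supported f"
    "\<forall>x. 0 \<le> f x \<and> f x \<le> (1::real)" "\<forall>x\<in>U. f x = 1" "\<forall>x. f x \<noteq> 0 \<longrightarrow> x \<in> V"
proof -
  obtain U K where UK: "open U" "compact K" "{y} \<subseteq> U" "U \<subseteq> K" "K \<subseteq> V"
    using locally_compact_compact_between[OF lc, of "{y}" V] assms(2,3) by auto
  moreover obtain f :: "'a \<Rightarrow> real" where "continuous_on UNIV f" "\<forall>x. 0 \<le> f x \<and> f x \<le> 1"
    "\<forall>x\<in>K. f x = 1" "\<forall>x. f x \<noteq> 0 \<longrightarrow> x \<in> V" "compactly_supported f"
    by (rule Urysohn_compactly_supported[OF lc \<open>compact K\<close> \<open>open V\<close> \<open>K \<subseteq> V\<close>])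
  ultimately show thesis
    using that[of U f] by blast
qed

lemma finite_bump_cover:
  fixes P :: "'a::t2_space set"
  assumes lc: "locally_compact_space (euclidean :: 'a topology)"
    and P: "compact P" and V: "\<And>y. y \<in> P \<Longrightarrow> open (V y) \<and> y \<in> V y"
  obtains F b where "finite F" "F \<subseteq> P" "\<forall>z\<in>P. \<exists>y\<in>F. b y z = 1"
    "\<forall>y\<in>F. continuous_on UNIV (b y) \<and> compactly_supported (b y) \<and>
      (\<forall>x. 0 \<le> b y x \<and> b y x \<le> (1::real)) \<and> (\<forall>x. b y x \<noteq> 0 \<longrightarrow> x \<in> V y)"
proof -
  have "\<forall>y\<in>P. \<exists>U f. open U \<and> y \<in> U \<and> continuous_on UNIV f \<and> compactly_supported f \<and>
      (\<forall>x. 0 \<le> f x \<and> f x \<le> (1::real)) \<and> (\<forall>x\<in>U. f x = 1) \<and> (\<forall>x. f x \<noteq> 0 \<longrightarrow> x \<in> V y)"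
  proof
    fix y assume "y \<in> P"
    then obtain U f where "open U" "y \<in> U" "continuous_on UNIV f" "compactly_supported f"
      "\<forall>x. 0 \<le> f x \<and> f x \<le> (1::real)" "\<forall>x\<in>U. f x = 1" "\<forall>x. f x \<noteq> 0 \<longrightarrow> x \<in> V y"
      using Urysohn_compactly_supported_nhd[OF lc, of "V y" y] V by auto
    then show "\<exists>U f. open U \<and> y \<in> U \<and> continuous_on UNIV f \<and> compactly_supported f \<and>
      (\<forall>x. 0 \<le> f x \<and> f x \<le> (1::real)) \<and> (\<forall>x\<in>U. f x = 1) \<and> (\<forall>x. f x \<noteq> 0 \<longrightarrow> x \<in> V y)"
      by blast
  qed
  from bchoice[OF this] obtain U where "\<forall>y\<in>P. \<exists>f. open (U y) \<and> y \<in> U y \<and>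
      continuous_on UNIV f \<and> compactly_supported f \<and> (\<forall>x. 0 \<le> f x \<and> f x \<le> (1::real)) \<and>
      (\<forall>x\<in>U y. f x = 1) \<and> (\<forall>x. f x \<noteq> 0 \<longrightarrow> x \<in> V y)"
    by blast
  from bchoice[OF this] obtain b where Ub: "\<forall>y\<in>P. open (U y) \<and> y \<in> U y \<and>
      continuous_on UNIV (b y) \<and> compactly_supported (b y) \<and> (\<forall>x. 0 \<le> b y x \<and> b y x \<le> (1::real)) \<and>
      (\<forall>x\<in>U y. b y x = 1) \<and> (\<forall>x. b y x \<noteq> 0 \<longrightarrow> x \<in> V y)"
    by blast
  obtain F where F: "F \<subseteq> P" "finite F" "P \<subseteq> (\<Union>y\<in>F. U y)"
    using compactE_image[OF P, of P U] Ub by blast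
  show thesis
  proof (rule that[OF F(2,1)])
    show "\<forall>z\<in>P. \<exists>y\<in>F. b y z = 1"
      using F(1,3) Ub by blast
  qed (use F(1) Ub in blast)
qed

definition partition_of_unity_on :: "'a::topological_space set \<Rightarrow> nat \<Rightarrow> (nat \<Rightarrow> 'a \<Rightarrow> real) \<Rightarrow> bool" where
  "partition_of_unity_on P k \<beta> \<longleftrightarrow>
     (\<forall>i<k. continuous_on UNIV (\<beta> i) \<and> compactly_supported (\<beta> i) \<and> (\<forall>z. 0 \<le> \<beta> i z)) \<and>
     (\<forall>z. (\<Sum>i<k. \<beta> i z) \<le> 1) \<and> (\<forall>z\<in>P. (\<Sum>i<k. \<beta> i z) = 1)"

lemma partition_of_unity_onD:
  assumes "partition_of_unity_on P k \<beta>"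
  shows "\<And>i. i < k \<Longrightarrow> continuous_on UNIV (\<beta> i)" "\<And>i. i < k \<Longrightarrow> compactly_supported (\<beta> i)"
    "\<And>i z. i < k \<Longrightarrow> 0 \<le> \<beta> i z" "\<And>z. (\<Sum>i<k. \<beta> i z) \<le> 1" "\<And>z. z \<in> P \<Longrightarrow> (\<Sum>i<k. \<beta> i z) = 1"
  using assms unfolding partition_of_unity_on_def by blast+

lemma partition_of_unity_telescoping:
  fixes b :: "nat \<Rightarrow> 'a::topological_space \<Rightarrow> real"
  assumes cont: "\<And>i. i < k \<Longrightarrow> continuous_on UNIV (b i)"
    and supp: "\<And>i. i < k \<Longrightarrow> compactly_supported (b i)"
    and bounds: "\<And>i z. i < k \<Longrightarrow> 0 \<le> b i z \<and> b i z \<le> 1"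
    and cover: "\<And>z. z \<in> P \<Longrightarrow> \<exists>i<k. b i z = 1"
  shows "partition_of_unity_on P k (\<lambda>i z. b i z * (\<Prod>j<i. 1 - b j z))"
proof -
  have telescope: "(\<Sum>i<n. b i z * (\<Prod>j<i. 1 - b j z)) = 1 - (\<Prod>j<n. 1 - b j z)" for n z
    by (induction n) (simp_all add: algebra_simps)
  have prod_bounds: "0 \<le> (\<Prod>j<i. 1 - b j z) \<and> (\<Prod>j<i. 1 - b j z) \<le> 1" if "i \<le> k" for i z
    using bounds that by (intro conjI prod_nonneg prod_le_1) auto
  have "continuous_on UNIV (\<lambda>z. b i z * (\<Prod>j<i. 1 - b j z))" if "i < k" for i
    using cont that by (intro continuous_intros) auto
  moreover have "compactly_supported (\<lambda>z. b i z * (\<Prod>j<i. 1 - b j z))" if i: "i < k" for i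
  proof -
    obtain K where "compact K" "\<And>z. z \<notin> K \<Longrightarrow> b i z = 0"
      using supp[OF i] unfolding compactly_supported_def by blast
    then show ?thesis
      unfolding compactly_supported_def by auto
  qed
  moreover have "(\<Prod>j<k. 1 - b j z) = 0" if z: "z \<in> P" for z
  proof -
    obtain i where "i < k" "b i z = 1"
      using cover[OF z] by blast
    then show ?thesis
      by (intro prod_zero) auto
  qed
  ultimately show ?thesis
    unfolding partition_of_unity_on_def telescope
    using bounds prod_bounds by (auto intro!: mult_nonneg_nonneg)
qed

lemma partition_of_unity_subordinate:
  fixes P :: "'a::t2_space set"
  assumes lc: "locally_compact_space (euclidean :: 'a topology)"
    and P: "compact P" and V: "\<And>y. y \<in> P \<Longrightarrow> open (V y) \<and> y \<in> V y"
  obtains k c \<beta> where "partition_of_unity_on P k \<beta>" "\<forall>i<k. c i \<in> P"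
    "\<forall>i<k. \<forall>z. \<beta> i z \<noteq> 0 \<longrightarrow> z \<in> V (c i)"
proof -
  obtain F b where F: "finite F" "F \<subseteq> P" "\<forall>z\<in>P. \<exists>y\<in>F. b y z = 1"
    and b: "\<forall>y\<in>F. continuous_on UNIV (b y) \<and> compactly_supported (b y) \<and>
      (\<forall>x. 0 \<le> b y x \<and> b y x \<le> (1::real)) \<and> (\<forall>x. b y x \<noteq> 0 \<longrightarrow> x \<in> V y)"
    by (rule finite_bump_cover[OF lc P V])
  obtain ys where ys: "set ys = F"
    using finite_list[OF F(1)] by blast
  define c where "c i = ys ! i" for i
  have c: "\<And>i. i < length ys \<Longrightarrow> c i \<in> F"
    using ys unfolding c_def by auto
  have "partition_of_unity_on P (length ys) (\<lambda>i z. b (c i) z * (\<Prod>j<i. 1 - b (c j) z))"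
  proof (rule partition_of_unity_telescoping)
    fix z assume "z \<in> P"
    then obtain y where "y \<in> F" "b y z = 1"
      using F(3) by blast
    moreover obtain i where "i < length ys" "c i = y"
      using ys \<open>y \<in> F\<close> unfolding c_def by (auto simp: in_set_conv_nth)
    ultimately show "\<exists>i<length ys. b (c i) z = 1"
      by blast
  qed (use b c in simp_all)
  moreover have "\<forall>i<length ys. \<forall>z. b (c i) z * (\<Prod>j<i. 1 - b (c j) z) \<noteq> 0 \<longrightarrow> z \<in> V (c i)"
    using b c by simp
  ultimately show thesis
    using that c F(2) by blast
qed

lemma proper_map_closed_image:
  fixes p :: "'x::t2_space \<Rightarrow> 'y::t2_space"
  assumes lc: "locally_compact_space (euclidean :: 'y topology)" and p: "proper_map_cont p"
    and Z: "closed Z"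
  shows "closed (p ` Z)"
  unfolding closed_def open_subopen[of "- (p ` Z)"]
proof
  fix y assume y: "y \<in> - p ` Z"
  obtain U C where UC: "open U" "compact C" "{y} \<subseteq> U" "U \<subseteq> C"
    using locally_compact_compact_between[OF lc, of "{y}" UNIV] by auto
  have "compact (p ` (Z \<inter> p -` C))"
    using p Z UC(2) unfolding proper_map_cont_def
    by (meson closed_Int_compact compact_continuous_image continuous_on_subset subset_UNIV)
  then have "open (U - p ` (Z \<inter> p -` C))"
    using UC(1) by (simp add: compact_imp_closed open_Diff)
  moreover have "y \<in> U - p ` (Z \<inter> p -` C)" "U - p ` (Z \<inter> p -` C) \<subseteq> - p ` Z"
    using y UC(3,4) by blast+
  ultimately show "\<exists>T. open T \<and> y \<in> T \<and> T \<subseteq> - p ` Z"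
    by blast
qed

lemma proper_map_tube:
  fixes p :: "'x::t2_space \<Rightarrow> 'y::t2_space"
  assumes "locally_compact_space (euclidean :: 'y topology)" "proper_map_cont p"
    and "open G" "p -` {y} \<subseteq> G"
  obtains V where "open V" "y \<in> V" "p -` V \<subseteq> G"
proof
  show "open (- p ` (- G))"
    using proper_map_closed_image[OF assms(1,2)] \<open>open G\<close> by (simp add: closed_Compl open_Compl)
qed (use \<open>p -` {y} \<subseteq> G\<close> in blast)+

section \<open>Estimates for partitions of unity\<close>

lemma exists_pos_mult_less:
  fixes c e :: real
  assumes "e > 0"
  obtains \<delta> where "\<delta> > 0" "\<delta> * c < e"
proof
  show "e / (\<bar>c\<bar> + 1) > 0"
    using assms by simp
  have "e / (\<bar>c\<bar> + 1) * c \<le> e / (\<bar>c\<bar> + 1) * \<bar>c\<bar>"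
    using assms by (intro mult_left_mono) auto
  also have "\<dots> = e * (\<bar>c\<bar> / (\<bar>c\<bar> + 1))"
    by simp
  also have "\<dots> < e"
    using assms by (simp add: divide_less_eq)
  finally show "e / (\<bar>c\<bar> + 1) * c < e" .
qed

lemma norm_diff_convex_combination_le:
  fixes v :: "'a::real_normed_vector" and \<beta> :: "nat \<Rightarrow> real"
  assumes "\<And>i. i < k \<Longrightarrow> 0 \<le> \<beta> i" "(\<Sum>i<k. \<beta> i) = 1 \<or> v = 0"
  shows "norm (v - (\<Sum>i<k. \<beta> i *\<^sub>R w i)) \<le> (\<Sum>i<k. \<beta> i * norm (v - w i))"
proof -
  have "v = (\<Sum>i<k. \<beta> i) *\<^sub>R v"
    using assms(2) by auto
  then have "v - (\<Sum>i<k. \<beta> i *\<^sub>R w i) = (\<Sum>i<k. \<beta> i *\<^sub>R (v - w i))"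
    by (simp add: scaleR_right_diff_distrib scaleR_sum_left sum_subtractf)
  also have "norm \<dots> \<le> (\<Sum>i<k. \<beta> i * norm (v - w i))"
    using assms(1) by (intro order.trans[OF norm_sum] sum_mono) simp
  finally show ?thesis .
qed

lemma sum_le_indicator:
  fixes \<beta> :: "'i \<Rightarrow> real"
  assumes "finite I" "\<And>i. i \<in> I \<Longrightarrow> 0 \<le> \<beta> i" "sum \<beta> I \<le> 1"
    and "\<And>i. i \<in> I \<Longrightarrow> \<beta> i \<noteq> 0 \<Longrightarrow> x \<in> C"
  shows "sum \<beta> I \<le> indicator C x"
proof (cases "x \<in> C")
  case False
  then have "sum \<beta> I = 0"
    using assms(4) by (intro sum.neutral) blast
  then show ?thesis by simp
qed (use assms(3) in simp)

lemma partition_of_unity_diff_le: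
  fixes \<phi> :: "'a::topological_space \<Rightarrow> 'b::real_normed_vector"
  assumes part: "partition_of_unity_on S k \<beta>" and zero: "\<And>x. x \<notin> S \<Longrightarrow> \<phi> x = 0"
    and osc: "\<And>i x. i < k \<Longrightarrow> \<beta> i x \<noteq> 0 \<Longrightarrow> norm (\<phi> x - \<gamma> i) \<le> \<omega> i"
  shows "norm (\<phi> x - (\<Sum>i<k. \<beta> i x *\<^sub>R \<gamma> i)) \<le> (\<Sum>i<k. \<omega> i * \<beta> i x)"
proof -
  have nonneg: "\<And>i. i < k \<Longrightarrow> 0 \<le> \<beta> i x"
    using partition_of_unity_onD(3)[OF part] .
  have "(\<Sum>i<k. \<beta> i x) = 1 \<or> \<phi> x = 0"
    using partition_of_unity_onD(5)[OF part] zero by blast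
  then have "norm (\<phi> x - (\<Sum>i<k. \<beta> i x *\<^sub>R \<gamma> i)) \<le> (\<Sum>i<k. \<beta> i x * norm (\<phi> x - \<gamma> i))"
    using nonneg by (rule norm_diff_convex_combination_le[rotated])
  also have "\<dots> \<le> (\<Sum>i<k. \<omega> i * \<beta> i x)"
    using nonneg osc
    by (intro sum_mono) (metis mult.commute mult_eq_0_iff mult_right_mono order_refl lessThan_iff)
  finally show ?thesis .
qed

lemma partition_of_unity_weighted_le_indicators:
  assumes part: "partition_of_unity_on S k \<beta>" and "0 \<le> a" "0 \<le> b"
    and C: "\<And>i. i < k \<Longrightarrow> i \<notin> J \<Longrightarrow> \<beta> i x \<noteq> 0 \<Longrightarrow> x \<in> C"
    and D: "\<And>i. i < k \<Longrightarrow> i \<in> J \<Longrightarrow> \<beta> i x \<noteq> 0 \<Longrightarrow> x \<in> D"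
  shows "(\<Sum>i<k. (if i \<in> J then b else a) * \<beta> i x) \<le> a * indicator C x + b * indicator D x"
proof -
  have nonneg: "\<And>i. i < k \<Longrightarrow> 0 \<le> \<beta> i x" and "(\<Sum>i<k. \<beta> i x) \<le> 1"
    using partition_of_unity_onD(3,4)[OF part] by auto
  have le1: "(\<Sum>i\<in>{..<k} \<inter> I. \<beta> i x) \<le> 1" for I
  proof -
    have "(\<Sum>i\<in>{..<k} \<inter> I. \<beta> i x) \<le> (\<Sum>i<k. \<beta> i x)"
      using nonneg by (intro sum_mono2) auto
    then show ?thesis
      using \<open>(\<Sum>i<k. \<beta> i x) \<le> 1\<close> by linarith
  qed
  have "(\<Sum>i<k. (if i \<in> J then b else a) * \<beta> i x)
      = a * (\<Sum>i\<in>{..<k} \<inter> - J. \<beta> i x) + b * (\<Sum>i\<in>{..<k} \<inter> J. \<beta> i x)"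
    by (simp add: if_distrib[of "\<lambda>c. c * _"] sum.If_cases sum_distrib_left Collect_mem_eq)
  also have "\<dots> \<le> a * indicator C x + b * indicator D x"
    using nonneg le1 C D \<open>0 \<le> a\<close> \<open>0 \<le> b\<close>
    by (intro add_mono mult_left_mono sum_le_indicator) auto
  finally show ?thesis .
qed

lemma partition_of_unity_combination_le:
  fixes \<beta> :: "nat \<Rightarrow> 'y::topological_space \<Rightarrow> real" and a m :: "nat \<Rightarrow> complex"
  assumes part: "partition_of_unity_on P k \<beta>" and "y \<in> P \<or> v = 0"
    and close: "\<And>i. i < k \<Longrightarrow> \<beta> i y \<noteq> 0 \<Longrightarrow> cmod (v - m i) \<le> \<eta>" and "0 \<le> \<eta>"
    and approx: "\<And>i. i < k \<Longrightarrow> cmod (\<beta> i y - a i) \<le> \<epsilon>"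
    and dom: "\<And>i. i < k \<Longrightarrow> cmod (m i) \<le> n i"
  shows "cmod (v - (\<Sum>i<k. a i * m i)) \<le> \<eta> + \<epsilon> * (\<Sum>i<k. n i)"
proof -
  note \<beta> = partition_of_unity_onD[OF part]
  have "v - (\<Sum>i<k. a i * m i) = (v - (\<Sum>i<k. \<beta> i y *\<^sub>R m i)) + (\<Sum>i<k. (\<beta> i y - a i) * m i)"
    by (simp add: scaleR_conv_of_real algebra_simps sum_subtractf)
  then have "cmod (v - (\<Sum>i<k. a i * m i))
      \<le> cmod (v - (\<Sum>i<k. \<beta> i y *\<^sub>R m i)) + cmod (\<Sum>i<k. (\<beta> i y - a i) * m i)"
    by (metis norm_triangle_ineq)
  also have "cmod (v - (\<Sum>i<k. \<beta> i y *\<^sub>R m i)) \<le> (\<Sum>i<k. \<beta> i y * cmod (v - m i))"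
    using \<beta>(3) \<beta>(5) \<open>y \<in> P \<or> v = 0\<close> by (intro norm_diff_convex_combination_le) auto
  also have "\<dots> \<le> (\<Sum>i<k. \<beta> i y * \<eta>)"
    using \<beta>(3) close by (intro sum_mono) (metis lessThan_iff mult_eq_0_iff mult_left_mono order_refl)
  also have "\<dots> \<le> \<eta>"
    using \<beta>(3,4) \<open>0 \<le> \<eta>\<close> sum_nonneg[of "{..<k}" "\<lambda>i. \<beta> i y"]
    by (simp add: mult_left_le_one_le flip: sum_distrib_right)
  also have "cmod (\<Sum>i<k. (\<beta> i y - a i) * m i) \<le> (\<Sum>i<k. \<epsilon> * n i)"
  proof (intro order.trans[OF norm_sum] sum_mono)
    fix i assume "i \<in> {..<k}"
    then show "cmod ((\<beta> i y - a i) * m i) \<le> \<epsilon> * n i"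
      using approx[of i] dom[of i] by (simp add: norm_mult mult_mono order_trans[OF norm_ge_zero])
  qed
  finally show ?thesis
    by (simp add: sum_distrib_left)
qed

section \<open>Radon measures and Riemann integrable functions\<close>

lemma radon_measure_sets: "radon_measure mu \<Longrightarrow> sets mu = sets borel"
  unfolding radon_measure_def by (elim conjE)

lemma radon_measure_space: "radon_measure mu \<Longrightarrow> space mu = UNIV"
  using sets_eq_imp_space_eq[OF radon_measure_sets] by force

lemma radon_measure_borel_sets:
  assumes "radon_measure mu" "B \<in> sets borel"
  shows "B \<in> sets mu" "B \<in> sets (completion mu)" "emeasure (completion mu) B = emeasure mu B"
  using radon_measure_sets[OF assms(1)] assms(2) by auto

lemma radon_measure_compact_finite:
  "radon_measure mu \<Longrightarrow> compact K \<Longrightarrow> emeasure mu K < \<infinity>"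
  unfolding radon_measure_def by (elim conjE) simp

lemma radon_measure_outer_regular:
  "radon_measure mu \<Longrightarrow> B \<in> sets mu \<Longrightarrow> emeasure mu B = (INF U\<in>{U. open U \<and> B \<subseteq> U}. emeasure mu U)"
  unfolding radon_measure_def by (elim conjE) blast

lemma radon_measure_null_open_cover:
  fixes mu :: "'a::topological_space measure"
  assumes mu: "radon_measure mu" and N: "N \<in> null_sets mu" and "\<delta> > 0"
  obtains U where "open U" "N \<subseteq> U" "integrable (completion mu) (indicator U :: 'a \<Rightarrow> real)"
    "measure (completion mu) U < \<delta>"
proof -
  have "(INF U\<in>{U. open U \<and> N \<subseteq> U}. emeasure mu U) = 0"
    using radon_measure_outer_regular[OF mu null_setsD2[OF N]] null_setsD1[OF N] by simp
  then have "(INF U\<in>{U. open U \<and> N \<subseteq> U}. emeasure mu U) < ennreal \<delta>"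
    using \<open>\<delta> > 0\<close> by simp
  then obtain U where U: "open U" "N \<subseteq> U" "emeasure mu U < ennreal \<delta>"
    unfolding INF_less_iff by blast
  then have sets: "U \<in> sets (completion mu)" "emeasure (completion mu) U = emeasure mu U"
    using radon_measure_borel_sets[OF mu borel_open[OF U(1)]] by auto
  have finite: "emeasure mu U < top"
    using U(3) order.strict_trans ennreal_less_top by blast
  then have "emeasure (completion mu) U < \<infinity>"
    using sets(2) by (simp add: infinity_ennreal_def)
  moreover have "measure (completion mu) U < \<delta>"
    using U(3) sets(2) finite by (simp add: measure_def)
  ultimately show thesis
    using that U(1,2) sets(1) integrable_real_indicator by blast
qed

lemma radon_measure_integrable_indicator_compact:
  fixes mu :: "'a::t2_space measure"
  assumes mu: "radon_measure mu" and "compact K"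
  shows "integrable (completion mu) (indicator K :: 'a \<Rightarrow> real)"
  using radon_measure_borel_sets[OF mu borel_compact[OF assms(2)]]
    radon_measure_compact_finite[OF mu assms(2)]
  by (intro integrable_real_indicator) auto

lemma borel_measurable_completion_continuous:
  fixes f :: "'a::topological_space \<Rightarrow> 'b::topological_space"
  assumes "radon_measure mu" "continuous_on UNIV f"
  shows "f \<in> borel_measurable (completion mu)"
  using measurable_cong_sets[OF radon_measure_sets[OF assms(1)] refl]
    borel_measurable_continuous_onI[OF assms(2)]
  by (auto intro: measurable_completion)

lemma integrable_compactly_supported:
  fixes f :: "'a::t2_space \<Rightarrow> 'b::{banach, second_countable_topology}"
  assumes mu: "radon_measure mu" and "continuous_on UNIV f" "compactly_supported f"
  shows "integrable (completion mu) f"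
proof -
  obtain K where K: "compact K" "\<And>x. x \<notin> K \<Longrightarrow> f x = 0"
    using assms(3) unfolding compactly_supported_def by blast
  have "bounded (f ` K)"
    using assms(2) K(1)
    by (intro compact_imp_bounded compact_continuous_image) (auto intro: continuous_on_subset)
  then obtain B where "\<forall>y\<in>f ` K. norm y \<le> B"
    unfolding bounded_iff by blast
  moreover have "K \<in> sets (completion mu)" "emeasure (completion mu) K < \<infinity>"
    using radon_measure_borel_sets[OF mu borel_compact[OF K(1)]]
      radon_measure_compact_finite[OF mu K(1)] by auto
  ultimately show ?thesis
    using K borel_measurable_completion_continuous[OF mu assms(2)]
    by (intro integrableI_bounded_set[where A=K and B=B]) auto
qed

lemma borel_measurable_completion_continuous_off_null:
  fixes f :: "'a::t2_space \<Rightarrow> 'b::topological_space"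
  assumes mu: "radon_measure mu" and N: "N \<in> null_sets mu"
    and cont: "\<And>x. x \<notin> N \<Longrightarrow> isCont f x"
  shows "f \<in> borel_measurable (completion mu)"
proof (rule borel_measurableI)
  fix S :: "'b set" assume "open S"
  define G where "G = \<Union>{U. open U \<and> U \<subseteq> f -` S}"
  have "f -` S = (G - N) \<union> (f -` S \<inter> N)"
  proof (intro equalityI subsetI)
    fix x assume x: "x \<in> f -` S"
    show "x \<in> (G - N) \<union> (f -` S \<inter> N)"
    proof (cases "x \<in> N")
      case False
      then obtain U where "open U" "x \<in> U" "\<forall>z\<in>U. f z \<in> S"
        using cont x \<open>open S\<close> unfolding continuous_at_open by blast
      then show ?thesis
        unfolding G_def using False by blast
    qed (use x in blast)
  qed (auto simp: G_def)
  moreover have "open G"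
    unfolding G_def by auto
  then have "G \<in> sets mu" "N \<in> sets mu"
    using radon_measure_borel_sets(1)[OF mu] N by auto
  ultimately have "f -` S \<in> sets (completion mu)"
    using null_sets_completion[OF N] by (metis Int_lower2 sets.Diff sets.Un sets_completionI_sets)
  then show "f -` S \<inter> space (completion mu) \<in> sets (completion mu)"
    using radon_measure_space[OF mu] by simp
qed

lemma RIE:
  fixes \<phi> :: "'a::t2_space \<Rightarrow> complex"
  assumes "\<phi> \<in> RI mu"
  obtains B S N where "0 \<le> B" "\<And>x. cmod (\<phi> x) \<le> B" "compact S" "\<And>x. x \<notin> S \<Longrightarrow> \<phi> x = 0"
    "N \<in> null_sets mu" "\<And>x. x \<notin> N \<Longrightarrow> isCont \<phi> x"
proof -
  obtain B where B: "\<forall>z\<in>range \<phi>. norm z \<le> B"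
    using assms unfolding RI_def bounded_iff by blast
  obtain N0 where "N0 \<in> null_sets (completion mu)" "{x. \<not> isCont \<phi> x} \<subseteq> N0"
    using assms unfolding RI_def by blast
  then obtain N where N: "N \<in> null_sets mu" "\<And>x. x \<notin> N \<Longrightarrow> isCont \<phi> x"
    unfolding null_sets_completion_iff2 by blast
  have S: "compact (closure {x. \<phi> x \<noteq> 0})"
    using assms unfolding RI_def by blast
  have "\<phi> x = 0" if "x \<notin> closure {x. \<phi> x \<noteq> 0}" for x
    using that closure_subset[of "{x. \<phi> x \<noteq> 0}"] by blast
  moreover have "0 \<le> max B 0" "cmod (\<phi> x) \<le> max B 0" for x
    using B by (auto simp: le_max_iff_disj)
  ultimately show thesis
    using that[of "max B 0" "closure {x. \<phi> x \<noteq> 0}" N] N S by blast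
qed

lemma RI_integrable:
  assumes mu: "radon_measure mu" and "\<phi> \<in> RI mu"
  shows "integrable (completion mu) \<phi>"
proof -
  obtain B S N where "0 \<le> B" and B: "\<And>x. cmod (\<phi> x) \<le> B"
    and S: "compact S" "\<And>x. x \<notin> S \<Longrightarrow> \<phi> x = 0"
    and N: "N \<in> null_sets mu" "\<And>x. x \<notin> N \<Longrightarrow> isCont \<phi> x"
    using RIE[OF assms(2)] by metis
  show ?thesis
  proof (rule integrableI_bounded_set[where A=S and B=B])
    show "S \<in> sets (completion mu)" "emeasure (completion mu) S < \<infinity>"
      using radon_measure_borel_sets[OF mu borel_compact[OF S(1)]]
        radon_measure_compact_finite[OF mu S(1)] by auto
    show "\<phi> \<in> borel_measurable (completion mu)"
      using borel_measurable_completion_continuous_off_null[OF mu N] .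
  qed (use B S in auto)
qed

lemma partition_of_unity_small_oscillation:
  fixes \<phi> :: "'a::t2_space \<Rightarrow> 'b::real_normed_vector"
  assumes lc: "locally_compact_space (euclidean :: 'a topology)"
    and S: "compact S" "open G" "S \<subseteq> G" and U: "open U" "\<And>x. x \<notin> U \<Longrightarrow> isCont \<phi> x"
    and "\<delta> > 0"
  obtains k c \<beta> where "partition_of_unity_on S k \<beta>"
    "\<forall>i<k. \<forall>z. \<beta> i z \<noteq> 0 \<longrightarrow> (c i \<in> U \<and> z \<in> U) \<or> (c i \<notin> U \<and> z \<in> G \<and> norm (\<phi> z - \<phi> (c i)) < \<delta>)"
proof -
  have "\<forall>x\<in>-U. \<exists>W. open W \<and> x \<in> W \<and> (\<forall>z\<in>W. norm (\<phi> z - \<phi> x) < \<delta>)"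
  proof
    fix x assume "x \<in> - U"
    then have "isCont \<phi> x"
      using U(2) by blast
    then show "\<exists>W. open W \<and> x \<in> W \<and> (\<forall>z\<in>W. norm (\<phi> z - \<phi> x) < \<delta>)"
      using \<open>\<delta> > 0\<close> unfolding continuous_at_open
      by (metis centre_in_ball dist_norm mem_ball norm_minus_commute open_ball)
  qed
  then obtain W where W: "\<forall>x\<in>-U. open (W x) \<and> x \<in> W x \<and> (\<forall>z\<in>W x. norm (\<phi> z - \<phi> x) < \<delta>)"
    by (rule bchoice[THEN exE])
  define V where "V x = (if x \<in> U then U else W x \<inter> G)" for x
  have "open (V y) \<and> y \<in> V y" if "y \<in> S" for y
    using that S U W unfolding V_def by auto
  then obtain k c \<beta> where "partition_of_unity_on S k \<beta>" "\<forall>i<k. c i \<in> S"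
    and sub: "\<forall>i<k. \<forall>z. \<beta> i z \<noteq> 0 \<longrightarrow> z \<in> V (c i)"
    by (rule partition_of_unity_subordinate[OF lc S(1)])
  moreover have "(c i \<in> U \<and> z \<in> U) \<or> (c i \<notin> U \<and> z \<in> G \<and> norm (\<phi> z - \<phi> (c i)) < \<delta>)"
    if "i < k" "\<beta> i z \<noteq> 0" for i z
  proof (cases "c i \<in> U")
    case False
    then have "z \<in> W (c i) \<inter> G"
      using sub that unfolding V_def by auto
    then show ?thesis
      using W False by blast
  qed (use sub that in \<open>auto simp: V_def\<close>)
  ultimately show thesis
    using that by blast
qed

lemma continuous_sandwich_off_open:
  fixes \<phi> :: "'a::t2_space \<Rightarrow> 'b::real_normed_vector"
  assumes lc: "locally_compact_space (euclidean :: 'a topology)"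
    and B: "\<And>x. norm (\<phi> x) \<le> B" and S: "compact S" "\<And>x. x \<notin> S \<Longrightarrow> \<phi> x = 0" "open G" "S \<subseteq> G"
    and U: "open U" "\<And>x. x \<notin> U \<Longrightarrow> isCont \<phi> x" and "\<delta> > 0"
  obtains g :: "'a \<Rightarrow> 'b" and h :: "'a \<Rightarrow> real"
  where "continuous_on UNIV g" "compactly_supported g" "continuous_on UNIV h" "compactly_supported h"
    "\<forall>x. norm (\<phi> x - g x) \<le> h x \<and> h x \<le> \<delta> * indicator G x + B * indicator U x"
proof -
  obtain k c \<beta> where part: "partition_of_unity_on S k \<beta>" and osc: "\<forall>i<k. \<forall>z. \<beta> i z \<noteq> 0 \<longrightarrow>
      (c i \<in> U \<and> z \<in> U) \<or> (c i \<notin> U \<and> z \<in> G \<and> norm (\<phi> z - \<phi> (c i)) < \<delta>)"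
    by (rule partition_of_unity_small_oscillation[OF lc S(1,3,4) U \<open>\<delta> > 0\<close>])
  define J where "J = {i. c i \<in> U}"
  define g where "g x = (\<Sum>i<k. \<beta> i x *\<^sub>R (if i \<in> J then 0 else \<phi> (c i)))" for x
  define h where "h x = (\<Sum>i<k. (if i \<in> J then B else \<delta>) * \<beta> i x)" for x
  note \<beta> = partition_of_unity_onD[OF part]
  have cont: "continuous_on UNIV g" "continuous_on UNIV h"
    unfolding g_def h_def using \<beta>(1) by (auto intro!: continuous_intros)
  have "compactly_supported (\<lambda>x. \<beta> i x *\<^sub>R v)" if "i < k" for i and v :: 'b
    by (rule compactly_supported_subset[OF \<beta>(2)[OF that]]) simp
  moreover have "compactly_supported (\<lambda>x. r * \<beta> i x)" if "i < k" for i r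
    by (rule compactly_supported_subset[OF \<beta>(2)[OF that]]) simp
  ultimately have supp: "compactly_supported g" "compactly_supported h"
    unfolding g_def h_def by (intro compactly_supported_sum; simp)+
  have "norm (\<phi> x - g x) \<le> h x" for x
    unfolding g_def h_def
  proof (rule partition_of_unity_diff_le[OF part S(2)])
    fix i x assume "i < k" "\<beta> i x \<noteq> 0"
    then show "norm (\<phi> x - (if i \<in> J then 0 else \<phi> (c i))) \<le> (if i \<in> J then B else \<delta>)"
      using osc B[of x] unfolding J_def by fastforce
  qed
  moreover have "h x \<le> \<delta> * indicator G x + B * indicator U x" for x
    unfolding h_def
  proof (rule partition_of_unity_weighted_le_indicators[OF part])
    show "0 \<le> B"
      using B[of x] norm_ge_zero order_trans by blast
  qed (use osc \<open>\<delta> > 0\<close> in \<open>auto simp: J_def\<close>)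
  ultimately show thesis
    using that cont supp by blast
qed

lemma RI_sandwich:
  fixes \<phi> :: "'a::t2_space \<Rightarrow> complex"
  assumes lc: "locally_compact_space (euclidean :: 'a topology)" and mu: "radon_measure mu"
    and "\<phi> \<in> RI mu" "e > 0"
  obtains g :: "'a \<Rightarrow> complex" and h :: "'a \<Rightarrow> real"
  where "continuous_on UNIV g" "compactly_supported g" "continuous_on UNIV h" "compactly_supported h"
    "\<forall>x. cmod (\<phi> x - g x) \<le> h x" "integral\<^sup>L (completion mu) h < e"
proof -
  obtain B S N where "0 \<le> B" and B: "\<And>x. cmod (\<phi> x) \<le> B"
    and S: "compact S" "\<And>x. x \<notin> S \<Longrightarrow> \<phi> x = 0"
    and N: "N \<in> null_sets mu" "\<And>x. x \<notin> N \<Longrightarrow> isCont \<phi> x"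
    using RIE[OF assms(3)] by metis
  obtain G L where GL: "open G" "compact L" "S \<subseteq> G" "G \<subseteq> L"
    using locally_compact_compact_between[OF lc S(1) open_UNIV subset_UNIV] by metis
  obtain \<delta> where "\<delta> > 0" and \<delta>: "\<delta> * (measure (completion mu) L + B) < e"
    using exists_pos_mult_less[OF \<open>e > 0\<close>] by metis
  obtain U where U: "open U" "N \<subseteq> U" and int_U: "integrable (completion mu) (indicator U :: 'a \<Rightarrow> real)"
    and measure_U: "measure (completion mu) U < \<delta>"
    using radon_measure_null_open_cover[OF mu N(1) \<open>\<delta> > 0\<close>] by metis
  have cont_off_U: "isCont \<phi> x" if "x \<notin> U" for x
    using N(2) U(2) that by blast
  obtain g :: "'a \<Rightarrow> complex" and h :: "'a \<Rightarrow> real"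
    where g: "continuous_on UNIV g" "compactly_supported g"
      and h: "continuous_on UNIV h" "compactly_supported h"
      and sandwich: "\<forall>x. cmod (\<phi> x - g x) \<le> h x \<and> h x \<le> \<delta> * indicator G x + B * indicator U x"
    by (rule continuous_sandwich_off_open[OF lc B S GL(1,3) U(1) cont_off_U \<open>\<delta> > 0\<close>])
  have int_L: "integrable (completion mu) (indicator L :: 'a \<Rightarrow> real)"
    using radon_measure_integrable_indicator_compact[OF mu GL(2)] .
  have "h x \<le> \<delta> * indicator L x + B * indicator U x" for x
    using sandwich indicator_leI[of x G x L] GL(4) \<open>\<delta> > 0\<close>
    by (smt (verit, best) mult_left_mono subsetD)
  then have "integral\<^sup>L (completion mu) h
      \<le> integral\<^sup>L (completion mu) (\<lambda>x. \<delta> * indicator L x + B * indicator U x)"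
    using integrable_compactly_supported[OF mu h] int_L int_U by (intro integral_mono) auto
  also have "\<dots> = \<delta> * measure (completion mu) L + B * measure (completion mu) U"
    using int_L int_U radon_measure_space[OF mu] by simp
  also have "\<dots> \<le> \<delta> * measure (completion mu) L + B * \<delta>"
    using measure_U \<open>0 \<le> B\<close> by (simp add: mult_left_mono)
  finally have "integral\<^sup>L (completion mu) h < e"
    using \<delta> by (simp add: algebra_simps)
  then show thesis
    using that g h sandwich by blast
qed

section \<open>The tau-closure of M\<close>

locale L1_conj_subspace =
  fixes mu :: "'a measure" and M :: "('a \<Rightarrow> complex) set"
  assumes M_L1: "M \<subseteq> L1 mu"
    and M_zero: "(\<lambda>x. 0) \<in> M"
    and M_add: "\<And>m n. m \<in> M \<Longrightarrow> n \<in> M \<Longrightarrow> (\<lambda>x. m x + n x) \<in> M"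
    and M_smult: "\<And>c m. m \<in> M \<Longrightarrow> (\<lambda>x. c * m x) \<in> M"
    and M_cnj: "\<And>m. m \<in> M \<Longrightarrow> (\<lambda>x. cnj (m x)) \<in> M"
begin

lemma M_integrable: "m \<in> M \<Longrightarrow> integrable (completion mu) m"
  using M_L1 unfolding L1_def by blast

lemma M_sum: "(\<And>i. i < k \<Longrightarrow> f i \<in> M) \<Longrightarrow> (\<lambda>x. \<Sum>i<(k::nat). f i x) \<in> M"
  by (induction k) (simp_all add: M_zero M_add)

lemma M_Re:
  assumes "m \<in> M"
  shows "(\<lambda>x. complex_of_real (Re (m x))) \<in> M"
proof -
  have "(\<lambda>x. (1/2) * (m x + cnj (m x))) \<in> M"
    using assms by (intro M_smult M_add M_cnj)
  then show ?thesis
    by (simp add: complex_add_cnj)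
qed

lemma in_tau_closureI:
  assumes "integrable (completion mu) h"
    and "\<And>e. e > 0 \<Longrightarrow> \<exists>m1\<in>M. \<exists>m2\<in>M. (\<forall>x. Im (m2 x) = 0 \<and> cmod (h x - m1 x) \<le> Re (m2 x)) \<and>
           Re (integral\<^sup>L (completion mu) m2) < e"
  shows "h \<in> tau_closure mu M"
  using assms unfolding tau_closure_def L1_def by (simp add: complex_is_Real_iff)

lemma tau_closureE:
  assumes "h \<in> tau_closure mu M" "e > 0"
  obtains m1 m2 where "m1 \<in> M" "m2 \<in> M" "\<And>x. Im (m2 x) = 0" "\<And>x. cmod (h x - m1 x) \<le> Re (m2 x)"
    "Re (integral\<^sup>L (completion mu) m2) < e"
  using assms unfolding tau_closure_def by (auto simp: complex_is_Real_iff)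

lemma tau_closure_integrable: "h \<in> tau_closure mu M \<Longrightarrow> integrable (completion mu) h"
  unfolding tau_closure_def L1_def by blast

lemma tau_closure_squeeze:
  assumes h: "integrable (completion mu) h"
    and approx: "\<And>e. e > 0 \<Longrightarrow> \<exists>t1\<in>tau_closure mu M. \<exists>t2\<in>tau_closure mu M.
           (\<forall>x. cmod (h x - t1 x) \<le> Re (t2 x)) \<and> Re (integral\<^sup>L (completion mu) t2) < e"
  shows "h \<in> tau_closure mu M"
proof (rule in_tau_closureI[OF h])
  fix e :: real assume "e > 0"
  obtain t1 t2 where t: "t1 \<in> tau_closure mu M" "t2 \<in> tau_closure mu M"
    "\<And>x. cmod (h x - t1 x) \<le> Re (t2 x)" "Re (integral\<^sup>L (completion mu) t2) < e/4"
    using approx[of "e/4"] \<open>e > 0\<close> by auto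
  obtain m1 m2 where m: "m1 \<in> M" "m2 \<in> M" "\<And>x. Im (m2 x) = 0" "\<And>x. cmod (t1 x - m1 x) \<le> Re (m2 x)"
    "Re (integral\<^sup>L (completion mu) m2) < e/4"
    using tau_closureE[OF t(1), of "e/4"] \<open>e > 0\<close> by auto
  obtain n1 n2 where n: "n1 \<in> M" "n2 \<in> M" "\<And>x. Im (n2 x) = 0" "\<And>x. cmod (t2 x - n1 x) \<le> Re (n2 x)"
    "Re (integral\<^sup>L (completion mu) n2) < e/4"
    using tau_closureE[OF t(2), of "e/4"] \<open>e > 0\<close> by auto
  (* Re n1 + n2 dominates Re t2, so k dominates |h - t1| + |t1 - m1|. *)
  define k where "k x = complex_of_real (Re (n1 x)) + n2 x + m2 x" for x
  have "k \<in> M"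
    unfolding k_def using m n by (intro M_add M_Re)
  moreover have "Im (k x) = 0 \<and> cmod (h x - m1 x) \<le> Re (k x)" for x
  proof -
    have "cmod (h x - m1 x) \<le> cmod (h x - t1 x) + cmod (t1 x - m1 x)"
      using norm_triangle_ineq[of "h x - t1 x" "t1 x - m1 x"] by simp
    moreover have "Re (t2 x) \<le> Re (n1 x) + cmod (t2 x - n1 x)"
      using complex_Re_le_cmod[of "t2 x - n1 x"] by simp
    ultimately show ?thesis
      unfolding k_def using t(3)[of x] m(3,4)[of x] n(3,4)[of x] by simp
  qed
  moreover have "Re (integral\<^sup>L (completion mu) k) < e"
  proof -
    have int: "integrable (completion mu) t2" "integrable (completion mu) n1"
      "integrable (completion mu) n2" "integrable (completion mu) m2"
      using t(2) m(2) n(1,2) by (simp_all add: tau_closure_integrable M_integrable)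
    have "integral\<^sup>L (completion mu) (\<lambda>x. Re (n1 x))
        \<le> integral\<^sup>L (completion mu) (\<lambda>x. Re (t2 x) + Re (n2 x))"
    proof (rule integral_mono)
      fix x
      show "Re (n1 x) \<le> Re (t2 x) + Re (n2 x)"
        using complex_Re_le_cmod[of "n1 x - t2 x"] n(4)[of x] by (simp add: norm_minus_commute)
    qed (use int in simp_all)
    then show ?thesis
      unfolding k_def using int t(4) m(5) n(5) by simp
  qed
  ultimately show "\<exists>m1\<in>M. \<exists>m2\<in>M. (\<forall>x. Im (m2 x) = 0 \<and> cmod (h x - m1 x) \<le> Re (m2 x)) \<and>
      Re (integral\<^sup>L (completion mu) m2) < e"
    using m(1) by blast
qed

end

section \<open>Fibrewise dense modules\<close>

locale fiberwise_dense_module = L1_conj_subspace mu M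
  for mu :: "'x::t2_space measure" and M :: "('x \<Rightarrow> complex) set" +
  fixes p :: "'x \<Rightarrow> 'y::t2_space" and A :: "('y \<Rightarrow> complex) set"
  assumes lcX: "locally_compact_space (euclidean :: 'x topology)"
    and lcY: "locally_compact_space (euclidean :: 'y topology)"
    and p: "proper_map_cont p"
    and mu: "radon_measure mu"
    and A_dense: "\<And>f e. f \<in> C0 \<Longrightarrow> e > 0 \<Longrightarrow> \<exists>a\<in>A. \<forall>y. cmod (f y - a y) < e"
    and M_cont: "\<And>m. m \<in> M \<Longrightarrow> continuous_on UNIV m"
    and M_module: "\<And>a m. a \<in> A \<Longrightarrow> m \<in> M \<Longrightarrow> (\<lambda>x. a (p x) * m x) \<in> M"
    and M_fiber_dense: "\<And>y g e. continuous_on (p -` {y}) g \<Longrightarrow> e > 0 \<Longrightarrow>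
                          \<exists>m\<in>M. \<forall>x\<in>p -` {y}. cmod (g x - m x) < e"
    and M_dom: "\<And>m. m \<in> M \<Longrightarrow> \<exists>n\<in>M. \<forall>x. n x \<in> \<real> \<and> cmod (m x) \<le> Re (n x)"
begin

lemma compact_p_image: "compact K \<Longrightarrow> compact (p ` K)"
  using p unfolding proper_map_cont_def
  by (meson compact_continuous_image continuous_on_subset subset_UNIV)

lemma M_dominated:
  assumes "m \<in> M"
  obtains n where "n \<in> M" "\<forall>x. Im (n x) = 0 \<and> cmod (m x) \<le> Re (n x)"
  using M_dom[OF assms] by (auto simp: complex_is_Real_iff)

lemma A_approx_partition:
  assumes part: "partition_of_unity_on P k \<beta>" and "\<epsilon> > 0"
  obtains a :: "nat \<Rightarrow> 'y \<Rightarrow> complex"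
  where "\<forall>i<k. a i \<in> A \<and> (\<forall>y. cmod (\<beta> i y - a i y) < \<epsilon>)"
proof -
  have "\<exists>a::'y \<Rightarrow> complex. i < k \<longrightarrow> a \<in> A \<and> (\<forall>y. cmod (\<beta> i y - a y) < \<epsilon>)" for i
  proof (cases "i < k")
    case True
    have "continuous_on UNIV (\<lambda>y. complex_of_real (\<beta> i y))"
      using partition_of_unity_onD(1)[OF part True] by (intro continuous_intros)
    moreover have "compactly_supported (\<lambda>y. complex_of_real (\<beta> i y))"
      by (rule compactly_supported_subset[OF partition_of_unity_onD(2)[OF part True]]) simp
    ultimately show ?thesis
      using A_dense[OF compactly_supported_in_C0 \<open>\<epsilon> > 0\<close>] by blast
  qed simp
  then have "\<forall>i. \<exists>a::'y \<Rightarrow> complex. i < k \<longrightarrow> a \<in> A \<and> (\<forall>y. cmod (\<beta> i y - a y) < \<epsilon>)"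
    by blast
  then obtain a :: "nat \<Rightarrow> 'y \<Rightarrow> complex"
    where "\<forall>i. i < k \<longrightarrow> a i \<in> A \<and> (\<forall>y. cmod (\<beta> i y - a i y) < \<epsilon>)"
    by (rule choice[THEN exE])
  then show thesis
    using that by blast
qed

lemma fiber_local_approx:
  assumes "continuous_on UNIV \<psi>" "\<eta> > 0"
  obtains m V where "m \<in> M" "open V" "y \<in> V" "\<forall>x. p x \<in> V \<longrightarrow> cmod (\<psi> x - m x) < \<eta>"
proof -
  obtain m where m: "m \<in> M" "\<forall>x\<in>p -` {y}. cmod (\<psi> x - m x) < \<eta>"
    using M_fiber_dense[OF continuous_on_subset[OF assms(1) subset_UNIV] assms(2)] by blast
  have "open {x. cmod (\<psi> x - m x) < \<eta>}"
    using assms(1) M_cont[OF m(1)] by (intro open_Collect_less continuous_intros) auto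
  moreover have "p -` {y} \<subseteq> {x. cmod (\<psi> x - m x) < \<eta>}"
    using m(2) by blast
  ultimately obtain V where "open V" "y \<in> V" "p -` V \<subseteq> {x. cmod (\<psi> x - m x) < \<eta>}"
    by (rule proper_map_tube[OF lcY p])
  then show thesis
    using that m(1) by blast
qed

lemma fiberwise_partition:
  assumes \<psi>: "continuous_on UNIV \<psi>" and P: "compact P" and W: "open W" "P \<subseteq> W" and "\<eta> > 0"
  obtains k \<beta> m n where "partition_of_unity_on P k \<beta>"
    "\<And>i. i < k \<Longrightarrow> m i \<in> M" "\<And>i. i < k \<Longrightarrow> n i \<in> M"
    "\<And>i x. i < k \<Longrightarrow> Im (n i x) = 0" "\<And>i x. i < k \<Longrightarrow> cmod (m i x) \<le> Re (n i x)"
    "\<And>i x. i < k \<Longrightarrow> \<beta> i (p x) \<noteq> 0 \<Longrightarrow> p x \<in> W \<and> cmod (\<psi> x - m i x) < \<eta>"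
proof -
  have "\<forall>y. \<exists>m. m \<in> M \<and> (\<exists>V. open V \<and> y \<in> V \<and> (\<forall>x. p x \<in> V \<longrightarrow> cmod (\<psi> x - m x) < \<eta>))"
  proof
    fix y
    obtain m V where "m \<in> M" "open V" "y \<in> V" "\<forall>x. p x \<in> V \<longrightarrow> cmod (\<psi> x - m x) < \<eta>"
      by (rule fiber_local_approx[OF \<psi> \<open>\<eta> > 0\<close>])
    then show "\<exists>m. m \<in> M \<and> (\<exists>V. open V \<and> y \<in> V \<and> (\<forall>x. p x \<in> V \<longrightarrow> cmod (\<psi> x - m x) < \<eta>))"
      by blast
  qed
  then obtain mf where "\<forall>y. mf y \<in> M \<and> (\<exists>V. open V \<and> y \<in> V \<and> (\<forall>x. p x \<in> V \<longrightarrow> cmod (\<psi> x - mf y x) < \<eta>))"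
    by (rule choice[THEN exE])
  then have "\<forall>y. \<exists>V. mf y \<in> M \<and> open V \<and> y \<in> V \<and> (\<forall>x. p x \<in> V \<longrightarrow> cmod (\<psi> x - mf y x) < \<eta>)"
    by blast
  then obtain V where mV: "\<forall>y. mf y \<in> M \<and> open (V y) \<and> y \<in> V y \<and>
      (\<forall>x. p x \<in> V y \<longrightarrow> cmod (\<psi> x - mf y x) < \<eta>)"
    by (rule choice[THEN exE])
  have "open (V y \<inter> W) \<and> y \<in> V y \<inter> W" if "y \<in> P" for y
    using mV W that by blast
  then obtain k c \<beta> where part: "partition_of_unity_on P k \<beta>" and "\<forall>i<k. c i \<in> P"
    and sub: "\<forall>i<k. \<forall>z. \<beta> i z \<noteq> 0 \<longrightarrow> z \<in> V (c i) \<inter> W"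
    by (rule partition_of_unity_subordinate[OF lcY P])
  have "\<forall>i. \<exists>n. n \<in> M \<and> (\<forall>x. Im (n x) = 0 \<and> cmod (mf (c i) x) \<le> Re (n x))"
  proof
    fix i
    obtain n where "n \<in> M" "\<forall>x. Im (n x) = 0 \<and> cmod (mf (c i) x) \<le> Re (n x)"
      using mV M_dominated by blast
    then show "\<exists>n. n \<in> M \<and> (\<forall>x. Im (n x) = 0 \<and> cmod (mf (c i) x) \<le> Re (n x))"
      by blast
  qed
  then obtain n where n: "\<forall>i. n i \<in> M \<and> (\<forall>x. Im (n i x) = 0 \<and> cmod (mf (c i) x) \<le> Re (n i x))"
    by (rule choice[THEN exE])
  show thesis
  proof (rule that[OF part, of "\<lambda>i. mf (c i)" n])
    fix i x assume "i < k" "\<beta> i (p x) \<noteq> 0"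
    then show "p x \<in> W \<and> cmod (\<psi> x - mf (c i) x) < \<eta>"
      using sub mV by blast
  qed (use mV n in auto)
qed

(* The dominating n is chosen before \<epsilon>, so the error term \<epsilon> \<integral>n can be made small. *)
lemma fiberwise_module_approx:
  assumes \<psi>: "continuous_on UNIV \<psi>" and P: "compact P" and W: "open W" "P \<subseteq> W" and "\<eta> > 0"
  obtains n where "n \<in> M" "\<forall>x. Im (n x) = 0 \<and> 0 \<le> Re (n x)"
    "\<forall>\<epsilon>>0. \<exists>m\<in>M. \<forall>x. p x \<in> P \<or> \<psi> x = 0 \<longrightarrow>
       cmod (\<psi> x - m x) \<le> \<eta> * indicator W (p x) + \<epsilon> * Re (n x)"
proof -
  obtain k \<beta> m n where part: "partition_of_unity_on P k \<beta>"
    and m: "\<And>i. i < k \<Longrightarrow> m i \<in> M" and n: "\<And>i. i < k \<Longrightarrow> n i \<in> M"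
    "\<And>i x. i < k \<Longrightarrow> Im (n i x) = 0" "\<And>i x. i < k \<Longrightarrow> cmod (m i x) \<le> Re (n i x)"
    and close: "\<And>i x. i < k \<Longrightarrow> \<beta> i (p x) \<noteq> 0 \<Longrightarrow> p x \<in> W \<and> cmod (\<psi> x - m i x) < \<eta>"
    by (rule fiberwise_partition[OF \<psi> P W \<open>\<eta> > 0\<close>]) auto
  have "(\<lambda>x. \<Sum>i<k. n i x) \<in> M"
    using n(1) by (rule M_sum)
  moreover have "Im (\<Sum>i<k. n i x) = 0 \<and> 0 \<le> Re (\<Sum>i<k. n i x)" for x
    using n(2) order_trans[OF norm_ge_zero n(3)] by (auto simp: Im_sum Re_sum intro!: sum_nonneg)
  moreover have "\<exists>m1\<in>M. \<forall>x. p x \<in> P \<or> \<psi> x = 0 \<longrightarrow>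
      cmod (\<psi> x - m1 x) \<le> \<eta> * indicator W (p x) + \<epsilon> * Re (\<Sum>i<k. n i x)" if "\<epsilon> > 0" for \<epsilon>
  proof -
    obtain a :: "nat \<Rightarrow> 'y \<Rightarrow> complex" where a: "\<forall>i<k. a i \<in> A \<and> (\<forall>y. cmod (\<beta> i y - a i y) < \<epsilon>)"
      by (rule A_approx_partition[OF part \<open>\<epsilon> > 0\<close>])
    have m1: "(\<lambda>x. \<Sum>i<k. a i (p x) * m i x) \<in> M"
      using a m by (intro M_sum M_module) simp_all
    have est: "cmod (\<psi> x - (\<Sum>i<k. a i (p x) * m i x))
        \<le> \<eta> * indicator W (p x) + \<epsilon> * Re (\<Sum>i<k. n i x)" if "p x \<in> P \<or> \<psi> x = 0" for x
      unfolding Re_sum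
    proof (rule partition_of_unity_combination_le[OF part that])
      show "cmod (\<psi> x - m i x) \<le> \<eta> * indicator W (p x)" if "i < k" "\<beta> i (p x) \<noteq> 0" for i
        using close[OF that] by simp
      show "cmod (\<beta> i (p x) - a i (p x)) \<le> \<epsilon>" if "i < k" for i
        using a that by (auto intro!: less_imp_le)
    qed (use n(3) \<open>\<eta> > 0\<close> in auto)
    show ?thesis
      by (intro bexI[OF _ m1] allI impI est)
  qed
  ultimately show thesis
    using that by blast
qed

lemma dominating_element_on_compact:
  assumes L: "compact L"
  obtains N where "N \<in> M" "\<forall>x. Im (N x) = 0 \<and> 0 \<le> Re (N x)" "\<forall>x\<in>L. 1 \<le> Re (N x)"
proof -
  have P: "compact (p ` L)"
    using L by (rule compact_p_image)
  obtain n where n: "n \<in> M" "\<forall>x. Im (n x) = 0 \<and> 0 \<le> Re (n x)"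
    and approx: "\<forall>\<epsilon>>0. \<exists>m\<in>M. \<forall>x. p x \<in> p ` L \<or> (1::complex) = 0 \<longrightarrow>
       cmod (1 - m x) \<le> 1/4 * indicator UNIV (p x) + \<epsilon> * Re (n x)"
    by (rule fiberwise_module_approx[where \<psi>="\<lambda>_. 1" and \<eta>="1/4",
          OF continuous_on_const P open_UNIV subset_UNIV]) simp
  have "continuous_on UNIV (\<lambda>x. Re (n x))"
    using M_cont[OF n(1)] by (intro continuous_intros)
  then have "bounded ((\<lambda>x. Re (n x)) ` L)"
    using L by (intro compact_imp_bounded compact_continuous_image) (auto intro: continuous_on_subset)
  then obtain B where B: "\<forall>x\<in>L. Re (n x) \<le> B"
    unfolding bounded_iff by (auto dest: abs_le_D1)
  obtain \<epsilon> where "\<epsilon> > 0" "\<epsilon> * B < 1/4"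
    using exists_pos_mult_less[of "1/4" B] by auto
  then obtain m where "m \<in> M" and m: "\<forall>x\<in>L. cmod (1 - m x) \<le> 1/4 + \<epsilon> * Re (n x)"
    using approx by fastforce
  obtain N0 where N0: "N0 \<in> M" "\<forall>x. Im (N0 x) = 0 \<and> cmod (m x) \<le> Re (N0 x)"
    by (rule M_dominated[OF \<open>m \<in> M\<close>])
  show thesis
  proof (rule that[OF M_smult[OF N0(1), of 2]])
    show "\<forall>x. Im (2 * N0 x) = 0 \<and> 0 \<le> Re (2 * N0 x)"
      using N0(2) by (auto intro: order_trans[OF norm_ge_zero])
    show "\<forall>x\<in>L. 1 \<le> Re (2 * N0 x)"
    proof
      fix x assume "x \<in> L"
      have "\<epsilon> * Re (n x) \<le> \<epsilon> * B"
        using B \<open>x \<in> L\<close> \<open>\<epsilon> > 0\<close> by (simp add: mult_left_mono)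
      moreover have "1 \<le> cmod (1 - m x) + cmod (m x)"
        using norm_triangle_ineq[of "1 - m x" "m x"] by simp
      ultimately show "1 \<le> Re (2 * N0 x)"
        using m \<open>x \<in> L\<close> \<open>\<epsilon> * B < 1/4\<close> N0(2)[rule_format, of x] by fastforce
    qed
  qed
qed

lemma dominating_element_near_compact:
  assumes "compact P"
  obtains W N where "open W" "P \<subseteq> W" "N \<in> M" "\<forall>x. Im (N x) = 0 \<and> 0 \<le> Re (N x)"
    "\<forall>x. p x \<in> W \<longrightarrow> 1 \<le> Re (N x)"
proof -
  obtain W C where WC: "open W" "compact C" "P \<subseteq> W" "W \<subseteq> C"
    using locally_compact_compact_between[OF lcY assms open_UNIV subset_UNIV] by metis
  moreover obtain N where "N \<in> M" "\<forall>x. Im (N x) = 0 \<and> 0 \<le> Re (N x)" "\<forall>x\<in>p -` C. 1 \<le> Re (N x)"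
    using p WC(2) unfolding proper_map_cont_def by (metis dominating_element_on_compact)
  ultimately show thesis
    using that[of W N] by blast
qed

lemma compactly_supported_in_tau_closure:
  assumes \<psi>: "continuous_on UNIV \<psi>" "compactly_supported \<psi>"
  shows "\<psi> \<in> tau_closure mu M"
proof (rule in_tau_closureI)
  show "integrable (completion mu) \<psi>"
    by (rule integrable_compactly_supported[OF mu \<psi>])
  fix e :: real assume "e > 0"
  obtain K where K: "compact K" "\<And>x. x \<notin> K \<Longrightarrow> \<psi> x = 0"
    using \<psi>(2) unfolding compactly_supported_def by blast
  have P: "compact (p ` K)"
    using K(1) by (rule compact_p_image)
  obtain W N where W: "open W" "p ` K \<subseteq> W" and N: "N \<in> M" "\<forall>x. Im (N x) = 0 \<and> 0 \<le> Re (N x)"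
    "\<forall>x. p x \<in> W \<longrightarrow> 1 \<le> Re (N x)"
    by (rule dominating_element_near_compact[OF P])
  obtain \<eta> where "\<eta> > 0" and \<eta>: "\<eta> * Re (integral\<^sup>L (completion mu) N) < e/2"
    using exists_pos_mult_less[of "e/2"] \<open>e > 0\<close> by (metis half_gt_zero)
  obtain n where n: "n \<in> M" "\<forall>x. Im (n x) = 0 \<and> 0 \<le> Re (n x)"
    and approx: "\<forall>\<epsilon>>0. \<exists>m\<in>M. \<forall>x. p x \<in> p ` K \<or> \<psi> x = 0 \<longrightarrow>
       cmod (\<psi> x - m x) \<le> \<eta> * indicator W (p x) + \<epsilon> * Re (n x)"
    by (rule fiberwise_module_approx[OF \<psi>(1) P W \<open>\<eta> > 0\<close>])
  obtain \<epsilon> where "\<epsilon> > 0" and \<epsilon>: "\<epsilon> * Re (integral\<^sup>L (completion mu) n) < e/2"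
    using exists_pos_mult_less[of "e/2"] \<open>e > 0\<close> by (metis half_gt_zero)
  then obtain m1 where "m1 \<in> M" and m1: "\<forall>x. p x \<in> p ` K \<or> \<psi> x = 0 \<longrightarrow>
      cmod (\<psi> x - m1 x) \<le> \<eta> * indicator W (p x) + \<epsilon> * Re (n x)"
    using approx by blast
  define m2 where "m2 x = \<eta> * N x + \<epsilon> * n x" for x
  have "m2 \<in> M"
    unfolding m2_def using N(1) n(1) by (intro M_add M_smult)
  moreover have "Im (m2 x) = 0 \<and> cmod (\<psi> x - m1 x) \<le> Re (m2 x)" for x
  proof
    show "Im (m2 x) = 0"
      unfolding m2_def using N(2) n(2) by simp
    have "p x \<in> p ` K \<or> \<psi> x = 0"
      using K(2) by blast
    then have "cmod (\<psi> x - m1 x) \<le> \<eta> * indicator W (p x) + \<epsilon> * Re (n x)"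
      using m1 by blast
    moreover have "indicator W (p x) \<le> Re (N x)"
      using N(2,3) by (auto simp: indicator_def)
    then have "\<eta> * indicator W (p x) \<le> \<eta> * Re (N x)"
      using \<open>\<eta> > 0\<close> by (intro mult_left_mono) auto
    ultimately show "cmod (\<psi> x - m1 x) \<le> Re (m2 x)"
      unfolding m2_def by simp
  qed
  moreover have "Re (integral\<^sup>L (completion mu) m2) < e"
    unfolding m2_def using M_integrable[OF N(1)] M_integrable[OF n(1)] \<eta> \<epsilon> by simp
  ultimately show "\<exists>m1\<in>M. \<exists>m2\<in>M. (\<forall>x. Im (m2 x) = 0 \<and> cmod (\<psi> x - m1 x) \<le> Re (m2 x)) \<and>
      Re (integral\<^sup>L (completion mu) m2) < e"
    using \<open>m1 \<in> M\<close> by blast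
qed

lemma RI_subset_tau_closure: "RI mu \<subseteq> tau_closure mu M"
proof
  fix \<phi> assume \<phi>: "\<phi> \<in> RI mu"
  show "\<phi> \<in> tau_closure mu M"
  proof (rule tau_closure_squeeze[OF RI_integrable[OF mu \<phi>]])
    fix e :: real assume "e > 0"
    obtain g :: "'x \<Rightarrow> complex" and h :: "'x \<Rightarrow> real"
      where g: "continuous_on UNIV g" "compactly_supported g"
        and h: "continuous_on UNIV h" "compactly_supported h"
        and sandwich: "\<forall>x. cmod (\<phi> x - g x) \<le> h x" "integral\<^sup>L (completion mu) h < e"
      by (rule RI_sandwich[OF lcX mu \<phi> \<open>e > 0\<close>])
    have "g \<in> tau_closure mu M"
      using compactly_supported_in_tau_closure[OF g] .
    moreover have "(\<lambda>x. complex_of_real (h x)) \<in> tau_closure mu M"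
      using h by (intro compactly_supported_in_tau_closure continuous_intros)
        (auto elim: compactly_supported_subset)
    ultimately show "\<exists>t1\<in>tau_closure mu M. \<exists>t2\<in>tau_closure mu M.
        (\<forall>x. cmod (\<phi> x - t1 x) \<le> Re (t2 x)) \<and> Re (integral\<^sup>L (completion mu) t2) < e"
      using sandwich by (intro bexI[of _ g] bexI[of _ "\<lambda>x. complex_of_real (h x)"]) auto
  qed
qed

end

theorem mainTheorem8:
  fixes p :: "'x::t2_space \<Rightarrow> 'y::t2_space"
    and mu :: "'x measure"
    and A :: "('y \<Rightarrow> complex) set"
    and M :: "('x \<Rightarrow> complex) set"
  assumes lcX: "locally_compact_space (euclidean :: 'x topology)"
    and lcY: "locally_compact_space (euclidean :: 'y topology)"
    and p: "proper_map_cont p"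
    and mu: "radon_measure mu"
    and A_sub: "A \<subseteq> C0"
    and A_zero: "(\<lambda>y. 0) \<in> A"
    and A_add: "\<And>a b. a \<in> A \<Longrightarrow> b \<in> A \<Longrightarrow> (\<lambda>y. a y + b y) \<in> A"
    and A_smult: "\<And>c a. a \<in> A \<Longrightarrow> (\<lambda>y. c * a y) \<in> A"
    and A_mult: "\<And>a b. a \<in> A \<Longrightarrow> b \<in> A \<Longrightarrow> (\<lambda>y. a y * b y) \<in> A"
    and A_dense: "\<And>f e. f \<in> C0 \<Longrightarrow> e > 0 \<Longrightarrow> \<exists>a\<in>A. \<forall>y. cmod (f y - a y) < e"
    and M_sub: "M \<subseteq> C0 \<inter> L1 mu"
    and M_zero: "(\<lambda>x. 0) \<in> M"
    and M_add: "\<And>m n. m \<in> M \<Longrightarrow> n \<in> M \<Longrightarrow> (\<lambda>x. m x + n x) \<in> M"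
    and M_smult: "\<And>c m. m \<in> M \<Longrightarrow> (\<lambda>x. c * m x) \<in> M"
    and M_module: "\<And>a m. a \<in> A \<Longrightarrow> m \<in> M \<Longrightarrow> (\<lambda>x. a (p x) * m x) \<in> M"
    and M_cnj: "\<And>m. m \<in> M \<Longrightarrow> (\<lambda>x. cnj (m x)) \<in> M"
    and M_fiber_dense: "\<And>y g e. continuous_on (p -` {y}) g \<Longrightarrow> e > 0 \<Longrightarrow>
                          \<exists>m\<in>M. \<forall>x\<in>p -` {y}. cmod (g x - m x) < e"
    and M_dom: "\<And>m. m \<in> M \<Longrightarrow> \<exists>n\<in>M. \<forall>x. n x \<in> \<real> \<and> cmod (m x) \<le> Re (n x)"
  shows "RI mu \<subseteq> tau_closure mu M"
proof -
  interpret fiberwise_dense_module mu M p A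
  proof
    show "M \<subseteq> L1 mu" "\<And>m. m \<in> M \<Longrightarrow> continuous_on UNIV m"
      using M_sub unfolding C0_def by auto
  qed (fact lcX lcY p mu A_dense M_zero M_add M_smult M_module M_cnj M_fiber_dense M_dom)+
  show ?thesis
    by (rule RI_subset_tau_closure)
qed

end
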